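(* For every $n\ge 1$, every integer $k\ge1$ and every symmetric $0/1$ matrix $a=(a_{ij})_{1\le i,j\le n}$ with zero diagonal, \[ \max_{\mathbf e_n\in[k]^n}\bigl|\,Q_{\mathrm{ICL}}(\mathbf e_n)-Q_{\mathrm{ML}}(\mathbf e_n)\,\bigr|\;\le\;\frac{k^2(\log n+2)}{n^2}. \]
   Context: For $\mathbf e_n=(e_1,\dots,e_n)\in[k]^n$, $[k]=\{1,\dots,k\}$, define the counters $n_a(\mathbf e_n)=\#\{i: e_i=a\}$; $n_{ab}(\mathbf e_n)=n_a(\mathbf e_n)n_b(\mathbf e_n)$ if $a\ne b$ and $n_{aa}(\mathbf e_n)=n_a(\mathbf e_n)(n_a(\mathbf e_n)-1)$; $o_{ab}(\mathbf e_n)=\sum_{1\le i,j\le n}\mathbf 1\{e_i=a,e_j=b\}a_{ij}$. Let $\tau(x)=x\log x+(1-x)\log(1-x)$ (with $0\log 0=0$). The likelihood modularity is $Q_{\mathrm{ML}}(\mathbf e_n)=\frac{1}{2n^2}\sum_{1\le a,b\le k}n_{ab}(\mathbf e_n)\,\tau\bigl(o_{ab}(\mathbf e_n)/n_{ab}(\mathbf e_n)\bigr)$ (terms with $n_{ab}(\mathbf e_n)=0$ are taken as $0$). Let $\tilde o_{aa}=o_{aa}/2$, $\tilde n_{aa}=n_{aa}/2$ and $\tilde o_{ab}=o_{ab}$, $\tilde n_{ab}=n_{ab}$ for $a\neq b$. The integrated conditional likelihood modularity is $Q_{\mathrm{ICL}}(\mathbf e_n)=\frac1{n^2}\sum_{1\le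 a\le b\le k}\log\frac{B(\tilde o_{ab}(\mathbf e_n)+1/2,\ \tilde n_{ab}(\mathbf e_n)-\tilde o_{ab}(\mathbf e_n)+1/2)}{B(1/2,1/2)}$, where $B$ is the beta function (it is the normalized log of the integral of the Bernoulli likelihood against independent $\mathrm{Beta}(1/2,1/2)$ priors on the connection probabilities). *)

theory Defs
  imports "HOL-Analysis.Analysis"
begin

text \<open>Nodes are 1..n, labels are 1..k; e :: nat => nat is a label assignment,
  A :: nat => nat => real the adjacency matrix.\<close>

definition cnt :: "nat \<Rightarrow> (nat \<Rightarrow> nat) \<Rightarrow> nat \<Rightarrow> nat" where
  "cnt n e a = card {i \<in> {1..n}. e i = a}"

definition npair :: "nat \<Rightarrow> (nat \<Rightarrow> nat) \<Rightarrow> nat \<Rightarrow> nat \<Rightarrow> real" where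
  "npair n e a b = (if a \<noteq> b then real (cnt n e a) * real (cnt n e b)
                    else real (cnt n e a) * (real (cnt n e a) - 1))"

definition opair :: "nat \<Rightarrow> (nat \<Rightarrow> nat \<Rightarrow> real) \<Rightarrow> (nat \<Rightarrow> nat) \<Rightarrow> nat \<Rightarrow> nat \<Rightarrow> real" where
  "opair n A e a b = (\<Sum>i\<in>{1..n}. \<Sum>j\<in>{1..n}. if e i = a \<and> e j = b then A i j else 0)"

text \<open>tau with the convention 0 log 0 = 0.\<close>
definition tau :: "real \<Rightarrow> real" where
  "tau x = (if x = 0 then 0 else x * ln x) + (if x = 1 then 0 else (1 - x) * ln (1 - x))"

definition Q_ML :: "nat \<Rightarrow> nat \<Rightarrow> (nat \<Rightarrow> nat \<Rightarrow> real) \<Rightarrow> (nat \<Rightarrow> nat) \<Rightarrow> real" where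
  "Q_ML n k A e = 1 / (2 * real n ^ 2) *
     (\<Sum>a\<in>{1..k}. \<Sum>b\<in>{1..k}.
        if npair n e a b = 0 then 0
        else npair n e a b * tau (opair n A e a b / npair n e a b))"

definition otil :: "nat \<Rightarrow> (nat \<Rightarrow> nat \<Rightarrow> real) \<Rightarrow> (nat \<Rightarrow> nat) \<Rightarrow> nat \<Rightarrow> nat \<Rightarrow> real" where
  "otil n A e a b = (if a = b then opair n A e a b / 2 else opair n A e a b)"

definition ntil :: "nat \<Rightarrow> (nat \<Rightarrow> nat) \<Rightarrow> nat \<Rightarrow> nat \<Rightarrow> real" where
  "ntil n e a b = (if a = b then npair n e a b / 2 else npair n e a b)"

definition Q_ICL :: "nat \<Rightarrow> nat \<Rightarrow> (nat \<Rightarrow> nat \<Rightarrow> real) \<Rightarrow> (nat \<Rightarrow> nat) \<Rightarrow> real" where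
  "Q_ICL n k A e = 1 / real n ^ 2 *
     (\<Sum>a\<in>{1..k}. \<Sum>b\<in>{a..k}.
        ln (Beta (otil n A e a b + 1/2) (ntil n e a b - otil n A e a b + 1/2)
            / Beta (1/2 :: real) (1/2)))"

end

theory Submission
  imports Defs
begin

text \<open>After folding the symmetric double sum in \<open>Q_ML\<close>, both modularities are sums over
  the block pairs \<open>a \<le> b\<close>. For a block pair with \<open>x\<close> edges among \<open>N\<close> possible ones the
  ICL term is the logarithm of the Krichevsky-Trofimov probability
  \<open>B(x + 1/2, N - x + 1/2) / B(1/2, 1/2) = (2x)! (2y)! / (4^N x! y! N!)\<close> with \<open>y = N - x\<close>,
  and the ML term is \<open>N tau(x/N) = x ln x + y ln y - N ln N\<close>. Stirling's formula with explicit
  remainder bounds shows that they differ by at most \<open>2 + (ln N)/2 \<le> 2 + ln n\<close>, as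
  \<open>N \<le> n^2\<close>; there are at most \<open>k^2\<close> block pairs.\<close>

lemma ln_add_one_le_cubic:
  fixes t :: real
  assumes "t \<ge> 0"
  shows "ln (1 + t) \<le> t - t^2/2 + t^3/3"
proof -
  let ?f = "\<lambda>s::real. s - s^2/2 + s^3/3 - ln (1 + s)"
  have "?f 0 \<le> ?f t"
  proof (rule DERIV_nonneg_imp_nondecreasing[OF assms])
    fix x :: real
    assume x: "0 \<le> x" "x \<le> t"
    have "DERIV ?f x :> 1 - x + x^2 - 1/(1 + x)"
      using x by (auto intro!: derivative_eq_intros simp: power2_eq_square)
    moreover have "1 - x + x^2 - 1/(1 + x) = x^3/(1 + x)"
      using x by (simp add: field_simps power2_eq_square power3_eq_cube)
    ultimately show "\<exists>y. DERIV ?f x :> y \<and> y \<ge> 0"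
      using x by auto
  qed
  then show ?thesis by simp
qed

lemma ln_add_one_ge_Pade:
  fixes t :: real
  assumes "t \<ge> 0"
  shows "2 * t / (2 + t) \<le> ln (1 + t)"
proof -
  let ?f = "\<lambda>s::real. (2 + s) * ln (1 + s) - 2 * s"
  have "?f 0 \<le> ?f t"
  proof (rule DERIV_nonneg_imp_nondecreasing[OF assms])
    fix x :: real
    assume x: "0 \<le> x" "x \<le> t"
    have "DERIV ?f x :> ln (1 + x) + (2 + x) / (1 + x) - 2"
      using x by (auto intro!: derivative_eq_intros)
    moreover have "ln (1 + x) + (2 + x) / (1 + x) - 2 \<ge> 0"
    proof -
      have "- ln (1 + x) = ln (1 / (1 + x))"
        using x by (simp add: ln_div)
      also have "\<dots> \<le> 1 / (1 + x) - 1"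
        using x by (intro ln_le_minus_one) auto
      also have "\<dots> = (2 + x) / (1 + x) - 2"
        using x by (simp add: field_simps)
      finally show ?thesis by linarith
    qed
    ultimately show "\<exists>y. DERIV ?f x :> y \<and> y \<ge> 0" by blast
  qed
  then show ?thesis
    using assms by (simp add: divide_simps mult.commute)
qed

definition stirling_remainder :: "nat \<Rightarrow> real" where
  "stirling_remainder m = ln (fact m) - (m * ln m - m + ln m / 2)"

lemma stirling_remainder_Suc:
  assumes "m \<ge> 1"
  shows "stirling_remainder (Suc m) = stirling_remainder m + 1 - (m + 1/2) * ln (1 + 1/m)"
proof -
  have "ln (1 + 1 / real m) = ln ((m + 1) / m)"
    using assms by (simp add: field_simps)
  also have "\<dots> = ln (m + 1) - ln m"
    using assms by (simp add: ln_div)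
  finally have "ln (1 + real m) = ln (1 + 1 / real m) + ln m" by simp
  moreover have "ln (fact (Suc m) :: real) = ln (1 + real m) + ln (fact m)"
    by (simp add: ln_mult add.commute)
  ultimately show ?thesis
    unfolding stirling_remainder_def by (simp add: algebra_simps)
qed

text \<open>The increment \<open>1 - (m + 1/2) ln (1 + 1/m)\<close> lies between
  \<open>1/(2(m+1)) - 1/(2m)\<close> and \<open>0\<close>, so the remainder decreases from its value \<open>1\<close> at \<open>m = 1\<close>
  while \<open>stirling_remainder m - 1/(2m)\<close> increases from \<open>1/2\<close>.\<close>

lemma stirling_remainder_bounds:
  assumes "m \<ge> 1"
  shows "1/2 + 1/(2*m) \<le> stirling_remainder m \<and> stirling_remainder m \<le> 1"
  using assms
proof (induction m rule: dec_induct)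
  case base
  then show ?case by (simp add: stirling_remainder_def)
next
  case (step m)
  define t where "t = 1 / real m"
  have t: "0 < t" "t \<le> 1" "real m = 1 / t"
    using step(1) by (auto simp: t_def)
  have lower: "1 \<le> (m + 1/2) * ln (1 + t)"
  proof -
    have "1 = (m + 1/2) * (2 * t / (2 + t))"
      using t by (simp add: field_simps)
    also have "\<dots> \<le> (m + 1/2) * ln (1 + t)"
      using ln_add_one_ge_Pade[of t] t by (intro mult_left_mono) auto
    finally show ?thesis .
  qed
  have upper: "(m + 1/2) * ln (1 + t) \<le> 1 + (1/(2*m) - 1/(2*(m + 1)))"
  proof -
    have "t^2/4 = 1/(4*m*m)"
      by (simp add: t_def power2_eq_square)
    also have "\<dots> \<le> 1/(2*m*(m + 1))"
      using step(1) by (intro divide_left_mono) (auto simp: algebra_simps intro!: add_pos_pos)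
    also have "\<dots> = 1/(2*m) - 1/(2*(m + 1))"
      using step(1) by (simp add: field_simps)
    finally have t_sq: "t^2/4 \<le> 1/(2*m) - 1/(2*(m + 1))" .
    have "(m + 1/2) * ln (1 + t) \<le> (m + 1/2) * (t - t^2/2 + t^3/3)"
      using ln_add_one_le_cubic[of t] t by (intro mult_left_mono) auto
    also have "\<dots> = 1 + t^2/12 + t^3/6"
      unfolding t(3) using t(1) by (simp add: field_simps power2_eq_square power3_eq_cube)
    also have "\<dots> \<le> 1 + t^2/4"
      using t(1,2) power_decreasing[of 2 3 t] by simp
    finally show ?thesis
      using t_sq by linarith
  qed
  have "stirling_remainder (Suc m) = stirling_remainder m + 1 - (m + 1/2) * ln (1 + t)"
    using stirling_remainder_Suc[OF step(1)] by (simp add: t_def)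
  then show ?case
    using step(3) lower upper by (simp add: algebra_simps)
qed

text \<open>Since \<open>fact (2*m) / (4^m * fact m) = Gamma (m + 1/2) / sqrt pi\<close>, this is the
  remainder in Stirling's formula for \<open>Gamma (m + 1/2)\<close>.\<close>

definition stirling_remainder_half :: "nat \<Rightarrow> real" where
  "stirling_remainder_half m = ln (fact (2*m)) - ln (fact m) - m * ln 4 - (m * ln m - m)"

lemma stirling_remainder_half_bounds:
  "-1/2 \<le> stirling_remainder_half m \<and> stirling_remainder_half m \<le> 1"
proof (cases "m = 0")
  case False
  have "stirling_remainder_half m = stirling_remainder (2*m) - stirling_remainder m + ln 2 / 2"
    using False ln_mult[of "2::real" 2] ln_mult[of 2 "real m"]
    by (simp add: stirling_remainder_half_def stirling_remainder_def algebra_simps)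
  moreover have "0 \<le> ln (2::real)" "ln (2::real) \<le> 1"
    using ln_le_minus_one[of "2::real"] by auto
  moreover have "0 \<le> 1 / (2 * real m)" "0 \<le> 1 / (2 * real (2 * m))"
    by simp_all
  moreover have "1/2 + 1/(2 * real m) \<le> stirling_remainder m \<and> stirling_remainder m \<le> 1"
    "1/2 + 1/(2 * real (2*m)) \<le> stirling_remainder (2*m) \<and> stirling_remainder (2*m) \<le> 1"
    using False by (intro stirling_remainder_bounds; simp)+
  ultimately show ?thesis
    by linarith
qed (simp add: stirling_remainder_half_def)

lemma Gamma_of_nat_plus_half:
  "Gamma (real m + 1/2) = sqrt pi * fact (2*m) / (4^m * fact m)"
proof (induction m)
  case 0
  then show ?case by (simp add: Gamma_one_half_real)
next
  case (Suc m)
  have "real m + 1/2 \<notin> \<int>\<^sub>\<le>\<^sub>0"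
    using nonpos_Ints_nonpos by fastforce
  then have "Gamma (real (Suc m) + 1/2) = (real m + 1/2) * Gamma (real m + 1/2)"
    using Gamma_plus1[of "real m + 1/2"] by (simp add: algebra_simps)
  also have "\<dots> = (real m + 1/2) * (sqrt pi * fact (2*m) / (4^m * fact m))"
    using Suc by simp
  also have "\<dots> = sqrt pi * fact (2 * Suc m) / (4^Suc m * fact (Suc m))"
  proof -
    have "(fact m :: real) \<noteq> 0" "real m + 1 \<noteq> 0" by simp_all
    moreover have "(2*real m + 2) * (2*real m + 1) = 4 * (real m + 1) * (real m + 1/2)"
      by (simp add: algebra_simps)
    moreover have "fact (2 * Suc m) = (2*real m + 2) * (2*real m + 1) * (fact (2*m) :: real)"
      by (simp add: algebra_simps)
    ultimately show ?thesis
      by (simp add: divide_simps mult_ac)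
  qed
  finally show ?case .
qed

lemma Beta_half_half: "Beta (1/2) (1/2 :: real) = pi"
  unfolding Beta_def by (simp add: Gamma_one_half_real)

lemma Beta_of_nat_plus_half_ratio:
  "Beta (real x + 1/2) (real y + 1/2) / Beta (1/2) (1/2)
     = fact (2*x) * fact (2*y) / (4^(x + y) * fact x * fact y * fact (x + y))"
proof -
  have "Gamma (real x + 1/2 + (real y + 1/2)) = Gamma (1 + real (x + y))"
    by (simp add: algebra_simps)
  also have "\<dots> = fact (x + y)"
    by (rule Gamma_fact)
  finally have "Gamma (real x + 1/2 + (real y + 1/2)) = fact (x + y)" .
  then show ?thesis
    unfolding Beta_half_half unfolding Beta_def Gamma_of_nat_plus_half
    by (simp add: field_simps power_add)
qed

lemma scaled_tau_eq:
  fixes x y :: nat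
  assumes "x + y \<ge> 1"
  shows "real (x + y) * tau (real x / real (x + y))
           = x * ln x + y * ln y - (x + y) * ln (x + y)"
proof -
  define N where "N = real (x + y)"
  have N: "N > 0" using assms by (simp add: N_def)
  have y_frac: "1 - real x / N = real y / N"
    using N by (simp add: N_def field_simps)
  have x_part: "N * (if real x / N = 0 then 0 else real x / N * ln (real x / N))
      = x * ln x - x * ln N"
    using N by (cases "x = 0") (simp_all add: ln_div field_simps)
  have y_part: "N * (if real x / N = 1 then 0 else (1 - real x / N) * ln (1 - real x / N))
      = y * ln y - y * ln N"
  proof (cases "y = 0")
    case True
    then show ?thesis using N by (simp add: N_def)
  next
    case False
    then have "real x / N \<noteq> 1"
      using N by (simp add: N_def field_simps)
    then show ?thesis
      using N False unfolding y_frac by (simp add: ln_div field_simps)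
  qed
  show ?thesis
    using x_part y_part unfolding tau_def distrib_left N_def by (simp add: algebra_simps)
qed

text \<open>Stirling's formula for \<open>fact N\<close>, \<open>Gamma (x + 1/2)\<close> and \<open>Gamma (y + 1/2)\<close>, where
  \<open>N = x + y\<close>, leaves exactly the entropy term \<open>x ln x + y ln y - N ln N\<close>; the remainders are
  bounded, except for the \<open>-(ln N)/2\<close> coming from the factor \<open>sqrt (2 pi N)\<close> of \<open>fact N\<close>.\<close>

lemma ln_Beta_ratio_tau_approx:
  fixes x y :: nat
  assumes "x + y \<ge> 1"
  shows "\<bar>ln (Beta (real x + 1/2) (real y + 1/2) / Beta (1/2) (1/2))
            - real (x + y) * tau (real x / real (x + y))\<bar> \<le> 2 + ln (real (x + y)) / 2"
proof -
  define N where "N = x + y"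
  have "ln (Beta (real x + 1/2) (real y + 1/2) / Beta (1/2) (1/2))
     = ln (fact (2*x)) + ln (fact (2*y)) - (x + y) * ln 4
       - ln (fact x) - ln (fact y) - ln (fact (x + y))"
    unfolding Beta_of_nat_plus_half_ratio by (simp add: ln_div ln_mult ln_realpow)
  also have "\<dots> = stirling_remainder_half x + stirling_remainder_half y
      + (x * ln x + y * ln y - N * ln N) - (stirling_remainder N + ln N / 2)"
    unfolding stirling_remainder_half_def stirling_remainder_def N_def by (simp add: algebra_simps)
  finally have ln_Beta: "ln (Beta (real x + 1/2) (real y + 1/2) / Beta (1/2) (1/2))
     = stirling_remainder_half x + stirling_remainder_half y
      + (x * ln x + y * ln y - N * ln N) - (stirling_remainder N + ln N / 2)" .
  have "1/2 + 1/(2 * real N) \<le> stirling_remainder N \<and> stirling_remainder N \<le> 1"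
    using assms by (intro stirling_remainder_bounds) (simp add: N_def)
  moreover have "0 \<le> 1/(2 * real N)" "0 \<le> ln (real N)"
    using assms by (simp_all add: N_def)
  moreover note stirling_remainder_half_bounds[of x] stirling_remainder_half_bounds[of y]
  ultimately have "\<bar>ln (Beta (real x + 1/2) (real y + 1/2) / Beta (1/2) (1/2))
            - real N * tau (real x / real N)\<bar> \<le> 2 + ln (real N) / 2"
    unfolding ln_Beta scaled_tau_eq[OF assms, folded N_def] abs_le_iff
    by linarith
  then show ?thesis
    unfolding N_def .
qed

definition block_ML :: "real \<Rightarrow> real \<Rightarrow> real" where
  "block_ML x N = (if N = 0 then 0 else N * tau (x / N))"

definition block_ICL :: "real \<Rightarrow> real \<Rightarrow> real" where
  "block_ICL x N = ln (Beta (x + 1/2) (N - x + 1/2) / Beta (1/2) (1/2))"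

lemma block_ML_half: "block_ML (x / 2) (N / 2) = block_ML x N / 2"
  unfolding block_ML_def by simp

lemma block_ICL_block_ML_approx:
  fixes x h n :: nat
  assumes "x \<le> h" "h \<le> n^2" "n \<ge> 1"
  shows "\<bar>block_ICL x h - block_ML x h\<bar> \<le> ln (real n) + 2"
proof (cases "h = 0")
  case True
  then show ?thesis
    using assms by (simp add: block_ICL_def block_ML_def Beta_half_half)
next
  case False
  define y where "y = h - x"
  have h: "h = x + y" "real h - real x = real y"
    using assms by (auto simp: y_def)
  have "ln (real h) \<le> ln (real n ^ 2)"
    using False assms by (intro ln_mono) (auto simp flip: of_nat_power)
  also have "\<dots> = 2 * ln (real n)"
    by (simp add: ln_realpow)
  finally have "ln (real h) \<le> 2 * ln (real n)" .
  moreover have "block_ICL x h = ln (Beta (real x + 1/2) (real y + 1/2) / Beta (1/2) (1/2))"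
    unfolding block_ICL_def h(2) ..
  moreover have "block_ML x h = real (x + y) * tau (real x / real (x + y))"
    using False unfolding block_ML_def h(1) by simp
  ultimately show ?thesis
    using ln_Beta_ratio_tau_approx[of x y] False unfolding h(1) by simp
qed

lemma sum_01_eq_of_nat:
  assumes "finite S" "\<forall>s\<in>S. f s = 0 \<or> f s = (1 :: real)"
  obtains m :: nat where "sum f S = m" "m \<le> card S"
proof -
  have "sum f S = (\<Sum>s\<in>S. if f s = 1 then 1 else 0)"
    using assms(2) by (intro sum.cong refl) auto
  also have "\<dots> = (\<Sum>s\<in>{s\<in>S. f s = 1}. 1)"
    by (rule sum.inter_filter[OF assms(1), symmetric])
  finally have "sum f S = card {s\<in>S. f s = 1}"
    by simp
  moreover have "card {s\<in>S. f s = 1} \<le> card S"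
    using assms(1) by (intro card_mono) auto
  ultimately show ?thesis
    using that by blast
qed

lemma block_sum_01_eq_of_nat:
  fixes A :: "'a \<Rightarrow> 'b \<Rightarrow> real"
  assumes "finite C" "finite D" "\<forall>i\<in>C. \<forall>j\<in>D. A i j = 0 \<or> A i j = 1"
  obtains m :: nat where "(\<Sum>i\<in>C. \<Sum>j\<in>D. A i j) = m" "m \<le> card C * card D"
proof -
  have "finite (C \<times> D)"
    using assms(1,2) by simp
  moreover have "\<forall>p\<in>C \<times> D. A (fst p) (snd p) = 0 \<or> A (fst p) (snd p) = 1"
    using assms(3) by auto
  ultimately obtain m :: nat where
    "(\<Sum>p\<in>C \<times> D. A (fst p) (snd p)) = m" "m \<le> card (C \<times> D)"
    by (rule sum_01_eq_of_nat)
  moreover have "(\<Sum>p\<in>C \<times> D. A (fst p) (snd p)) = (\<Sum>i\<in>C. \<Sum>j\<in>D. A i j)"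
    by (simp add: sum.cartesian_product')
  ultimately show ?thesis
    using that by (simp add: card_cartesian_product)
qed

text \<open>Symmetry and the zero diagonal make the block sum count every edge twice; the
  inequality says \<open>m \<le> card C choose 2\<close>.\<close>

lemma symmetric_block_sum_eq_double:
  assumes "finite C" "\<forall>i\<in>C. \<forall>j\<in>C. A i j = 0 \<or> A i j = 1"
    "\<forall>i\<in>C. \<forall>j\<in>C. A i j = A j i" "\<forall>i\<in>C. A i i = 0"
  shows "\<exists>m::nat. (\<Sum>i\<in>C. \<Sum>j\<in>C. A i j) = 2 * real m \<and> 2 * m + card C \<le> card C * card C"
  using assms
proof (induction C rule: finite_induct)
  case empty
  then show ?case by simp
next
  case (insert c C)
  have "\<forall>i\<in>C. \<forall>j\<in>C. A i j = 0 \<or> A i j = 1" "\<forall>i\<in>C. \<forall>j\<in>C. A i j = A j i" "\<forall>i\<in>C. A i i = 0"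
    using insert.prems by blast+
  then obtain m where m: "(\<Sum>i\<in>C. \<Sum>j\<in>C. A i j) = 2 * real m" "2 * m + card C \<le> card C * card C"
    using insert.IH by blast
  have "\<forall>j\<in>C. A c j = 0 \<or> A c j = 1"
    using insert.prems(1) by blast
  then obtain r :: nat where r: "(\<Sum>j\<in>C. A c j) = r" "r \<le> card C"
    using sum_01_eq_of_nat insert.hyps(1) by blast
  have "(\<Sum>i\<in>C. A i c) = (\<Sum>j\<in>C. A c j)"
    by (rule sum.cong[OF refl]) (use insert.prems(2) in blast)
  moreover have "A c c = 0"
    using insert.prems(3) by blast
  ultimately have "(\<Sum>i\<in>insert c C. \<Sum>j\<in>insert c C. A i j) = 2 * real (m + r)"
    using insert.hyps m(1) r(1) by (simp add: sum.distrib)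
  moreover have "2 * (m + r) + card (insert c C) \<le> card (insert c C) * card (insert c C)"
    using insert.hyps m(2) r(2) by (simp add: algebra_simps)
  ultimately show ?case by blast
qed

lemma opair_eq_block_sum:
  "opair n A e a b = (\<Sum>i\<in>{i\<in>{1..n}. e i = a}. \<Sum>j\<in>{j\<in>{1..n}. e j = b}. A i j)"
proof -
  have "opair n A e a b
      = (\<Sum>i\<in>{1..n}. if e i = a then (\<Sum>j\<in>{1..n}. if e j = b then A i j else 0) else 0)"
    unfolding opair_def by (intro sum.cong refl) (auto intro: sum.neutral)
  also have "\<dots> = (\<Sum>i\<in>{i\<in>{1..n}. e i = a}. \<Sum>j\<in>{1..n}. if e j = b then A i j else 0)"
    by (simp only: sum.inter_filter[OF finite_atLeastAtMost])
  also have "\<dots> = (\<Sum>i\<in>{i\<in>{1..n}. e i = a}. \<Sum>j\<in>{j\<in>{1..n}. e j = b}. A i j)"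
    by (simp only: sum.inter_filter[OF finite_atLeastAtMost])
  finally show ?thesis .
qed

lemma opair_commute:
  assumes "\<forall>i\<in>{1..n}. \<forall>j\<in>{1..n}. A i j = A j i"
  shows "opair n A e a b = opair n A e b a"
proof -
  have "opair n A e a b = (\<Sum>i\<in>{i\<in>{1..n}. e i = a}. \<Sum>j\<in>{j\<in>{1..n}. e j = b}. A j i)"
    unfolding opair_eq_block_sum using assms by (intro sum.cong refl) auto
  also have "\<dots> = opair n A e b a"
    unfolding opair_eq_block_sum by (rule sum.swap)
  finally show ?thesis .
qed

lemma cnt_le: "cnt n e a \<le> n"
proof -
  have "cnt n e a \<le> card {1..n}"
    unfolding cnt_def by (intro card_mono) auto
  then show ?thesis by simp
qed

lemma otil_ntil_of_nat:
  assumes "\<forall>i\<in>{1..n}. \<forall>j\<in>{1..n}. A i j = 0 \<or> A i j = 1"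
    and "\<forall>i\<in>{1..n}. \<forall>j\<in>{1..n}. A i j = A j i"
    and "\<forall>i\<in>{1..n}. A i i = 0"
  obtains x h :: nat where "otil n A e a b = x" "ntil n e a b = h" "x \<le> h" "h \<le> n^2"
proof -
  define C where "C a = {i\<in>{1..n}. e i = a}" for a
  have C_sub: "C a \<subseteq> {1..n}" for a
    by (auto simp: C_def)
  have C_fin: "finite (C a)" for a
    using C_sub by (rule finite_subset) simp
  have cnt_C: "cnt n e a = card (C a)" for a
    unfolding cnt_def C_def ..
  have opair: "opair n A e u v = (\<Sum>i\<in>C u. \<Sum>j\<in>C v. A i j)" for u v
    unfolding opair_eq_block_sum C_def ..
  have restrict: "\<forall>i\<in>C u. \<forall>j\<in>C v. P i j" if "\<forall>i\<in>{1..n}. \<forall>j\<in>{1..n}. P i j" for P u v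
    using that C_sub by blast
  have square_le: "card (C u) * card (C v) \<le> n^2" for u v
    using mult_le_mono[OF cnt_le[of n e u] cnt_le[of n e v]]
    unfolding cnt_C power2_eq_square by simp
  show ?thesis
  proof (cases "a = b")
    case True
    define c where "c = card (C a)"
    have "\<forall>i\<in>C a. A i i = 0"
      using assms(3) C_sub by blast
    then obtain m where m: "opair n A e a a = 2 * real m" "2 * m + c \<le> c * c"
      using symmetric_block_sum_eq_double[OF C_fin restrict[OF assms(1)] restrict[OF assms(2)]]
      unfolding opair c_def by blast
    have "even (c * (c - 1))"
      by (cases "even c") auto
    then obtain h where h: "c * (c - 1) = 2 * h"
      by (rule evenE)
    have "npair n e a a = real (c * (c - 1))"
      unfolding npair_def cnt_C c_def[symmetric] by (cases c) (auto simp: algebra_simps)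
    then have "ntil n e a a = h"
      unfolding ntil_def h by simp
    moreover have "otil n A e a a = m"
      unfolding otil_def m(1) by simp
    moreover have "c * (c - 1) = c * c - c"
      by (simp add: diff_mult_distrib2)
    then have "m \<le> h" "h \<le> n^2"
      using m(2) h square_le[of a a] unfolding c_def by linarith+
    ultimately show ?thesis
      using that True by blast
  next
    case False
    obtain m :: nat where m: "opair n A e a b = m" "m \<le> card (C a) * card (C b)"
      unfolding opair by (rule block_sum_01_eq_of_nat[OF C_fin C_fin restrict[OF assms(1)]])
    have "ntil n e a b = card (C a) * card (C b)"
      using False by (simp add: ntil_def npair_def cnt_C)
    moreover have "otil n A e a b = m"
      using False m(1) by (simp add: otil_def)
    ultimately show ?thesis
      using that m(2) square_le by blast
  qed
qed

lemma sum_square_symmetric: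
  fixes F :: "nat \<Rightarrow> nat \<Rightarrow> real"
  assumes "\<And>a b. F a b = F b a"
  shows "(\<Sum>a\<in>{1..k}. \<Sum>b\<in>{1..k}. F a b)
           = 2 * (\<Sum>a\<in>{1..k}. \<Sum>b\<in>{a..k}. if a = b then F a b / 2 else F a b)"
proof (induction k)
  case 0
  then show ?case by simp
next
  case (Suc k)
  have "(\<Sum>a\<in>{1..Suc k}. \<Sum>b\<in>{1..Suc k}. F a b)
      = (\<Sum>a\<in>{1..k}. \<Sum>b\<in>{1..k}. F a b) + 2 * (\<Sum>a\<in>{1..k}. F a (Suc k)) + F (Suc k) (Suc k)"
    using assms by (simp add: sum.distrib)
  moreover have "(\<Sum>a\<in>{1..Suc k}. \<Sum>b\<in>{a..Suc k}. if a = b then F a b / 2 else F a b)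
      = (\<Sum>a\<in>{1..k}. \<Sum>b\<in>{a..k}. if a = b then F a b / 2 else F a b)
        + (\<Sum>a\<in>{1..k}. F a (Suc k)) + F (Suc k) (Suc k) / 2"
  proof -
    have "(\<Sum>a\<in>{1..k}. \<Sum>b\<in>{a..Suc k}. if a = b then F a b / 2 else F a b)
        = (\<Sum>a\<in>{1..k}. (\<Sum>b\<in>{a..k}. if a = b then F a b / 2 else F a b) + F a (Suc k))"
      by (intro sum.cong refl) auto
    then show ?thesis
      by (simp add: sum.distrib)
  qed
  ultimately show ?case
    using Suc by simp
qed

lemma Q_ML_eq_upper_triangle:
  assumes "\<forall>i\<in>{1..n}. \<forall>j\<in>{1..n}. A i j = A j i"
  shows "Q_ML n k A e
           = 1 / real n ^ 2 * (\<Sum>a\<in>{1..k}. \<Sum>b\<in>{a..k}. block_ML (otil n A e a b) (ntil n e a b))"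
proof -
  define F where "F a b = block_ML (opair n A e a b) (npair n e a b)" for a b
  have "F a b = F b a" for a b
    unfolding F_def opair_commute[OF assms, of e a b] npair_def by (simp add: mult.commute)
  moreover have "block_ML (otil n A e a b) (ntil n e a b) = (if a = b then F a b / 2 else F a b)" for a b
    unfolding F_def otil_def ntil_def by (simp add: block_ML_half)
  moreover have "Q_ML n k A e = 1 / (2 * real n ^ 2) * (\<Sum>a\<in>{1..k}. \<Sum>b\<in>{1..k}. F a b)"
    unfolding Q_ML_def F_def block_ML_def ..
  ultimately show ?thesis
    using sum_square_symmetric[of F k] by simp
qed

lemma Q_ICL_eq_upper_triangle:
  "Q_ICL n k A e
     = 1 / real n ^ 2 * (\<Sum>a\<in>{1..k}. \<Sum>b\<in>{a..k}. block_ICL (otil n A e a b) (ntil n e a b))"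
  unfolding Q_ICL_def block_ICL_def ..

lemma Q_ICL_Q_ML_diff_bound:
  assumes "n \<ge> 1"
    and "\<forall>i\<in>{1..n}. \<forall>j\<in>{1..n}. A i j = 0 \<or> A i j = 1"
    and "\<forall>i\<in>{1..n}. \<forall>j\<in>{1..n}. A i j = A j i"
    and "\<forall>i\<in>{1..n}. A i i = 0"
  shows "\<bar>Q_ICL n k A e - Q_ML n k A e\<bar> \<le> real k ^ 2 * (ln (real n) + 2) / real n ^ 2"
proof -
  define D where
    "D a b = block_ICL (otil n A e a b) (ntil n e a b) - block_ML (otil n A e a b) (ntil n e a b)"
    for a b
  have D_bound: "\<bar>D a b\<bar> \<le> ln (real n) + 2" for a b
  proof -
    obtain x h :: nat where "otil n A e a b = x" "ntil n e a b = h" "x \<le> h" "h \<le> n^2"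
      using otil_ntil_of_nat assms(2-4) .
    then show ?thesis
      unfolding D_def using block_ICL_block_ML_approx assms(1) by simp
  qed
  have "\<bar>Q_ICL n k A e - Q_ML n k A e\<bar> = \<bar>\<Sum>a\<in>{1..k}. \<Sum>b\<in>{a..k}. D a b\<bar> / real n ^ 2"
    unfolding Q_ICL_eq_upper_triangle Q_ML_eq_upper_triangle[OF assms(3)] D_def
    by (simp add: sum_subtractf flip: diff_divide_distrib)
  also have "\<dots> \<le> (\<Sum>a\<in>{1..k}. \<Sum>b\<in>{a..k}. \<bar>D a b\<bar>) / real n ^ 2"
    by (intro divide_right_mono order_trans[OF sum_abs] sum_mono sum_abs) simp
  also have "\<dots> \<le> (\<Sum>a\<in>{1..k}. \<Sum>b\<in>{a..k}. ln (real n) + 2) / real n ^ 2"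
    by (intro divide_right_mono sum_mono D_bound) simp
  also have "\<dots> \<le> (\<Sum>a\<in>{1..k}. \<Sum>b\<in>{1..k}. ln (real n) + 2) / real n ^ 2"
    using assms(1) by (intro divide_right_mono sum_mono sum_mono2) auto
  also have "\<dots> = real k ^ 2 * (ln (real n) + 2) / real n ^ 2"
    by (simp add: power2_eq_square)
  finally show ?thesis .
qed

theorem lemma1:
  fixes n k :: nat and A :: "nat \<Rightarrow> nat \<Rightarrow> real"
  assumes "n \<ge> 1" and "k \<ge> 1"
    and "\<forall>i\<in>{1..n}. \<forall>j\<in>{1..n}. A i j = 0 \<or> A i j = 1"
    and "\<forall>i\<in>{1..n}. \<forall>j\<in>{1..n}. A i j = A j i"
    and "\<forall>i\<in>{1..n}. A i i = 0"
  shows "(MAX e\<in>{e. (\<forall>i\<in>{1..n}. e i \<in> {1..k}) \<and> (\<forall>i. i \<notin> {1..n} \<longrightarrow> e i = 0)}.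
            \<bar>Q_ICL n k A e - Q_ML n k A e\<bar>)
         \<le> real k ^ 2 * (ln (real n) + 2) / real n ^ 2"
proof -
  define S where "S = {e. (\<forall>i\<in>{1..n}. e i \<in> {1..k}) \<and> (\<forall>i. i \<notin> {1..n} \<longrightarrow> e i = (0::nat))}"
  have "S = {e. \<forall>i. (i \<in> {1..n} \<longrightarrow> e i \<in> {1..k}) \<and> (i \<notin> {1..n} \<longrightarrow> e i = 0)}"
    unfolding S_def by auto
  then have "finite S"
    by (simp only:) (intro finite_set_of_finite_funs; simp)
  moreover have "(\<lambda>i. if i \<in> {1..n} then 1 else 0) \<in> S"
    unfolding S_def using assms(2) by auto
  ultimately show ?thesis
    unfolding S_def[symmetric] using Q_ICL_Q_ML_diff_bound[OF assms(1) assms(3-5)]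
    by (intro Max.boundedI) auto
qed

end
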